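(* Let $\mathbb{K}$ be a field of characteristic not $2$, $E$ an $n$-dimensional $\mathbb{K}$-vector space and $\mathcal{V}$ a linear subspace of $\mathcal{L}(E)$. Suppose either (a) $n\geq 3$ and every $u\in\mathcal{V}$ has at most two distinct eigenvalues in $\mathbb{K}$, or (b) $n\geq 2$ and every $u\in\mathcal{V}$ has at most one nonzero eigenvalue in $\mathbb{K}$. Then there exists a $\mathcal{V}$-good vector in $E$.
   Context: A nonzero vector $x\in E$ is $\mathcal{V}$-good if there is no $u\in\mathcal{V}$ with $\operatorname{im}u=\mathbb{K}x$ and $\operatorname{tr}(u)=0$. *)

theory Defs
  imports "Jordan_Normal_Form.Char_Poly"
begin

text \<open>E = K^n (column vectors of length n), L(E) = n x n matrices over K.\<close>

definition mat_trace :: "'a::comm_ring_1 mat \<Rightarrow> 'a" where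
  "mat_trace A = (\<Sum>i<dim_row A. A $$ (i, i))"

definition lin_subspace_mat :: "nat \<Rightarrow> 'a::field mat set \<Rightarrow> bool" where
  "lin_subspace_mat n V \<longleftrightarrow> V \<subseteq> carrier_mat n n \<and> 0\<^sub>m n n \<in> V \<and>
     (\<forall>A\<in>V. \<forall>B\<in>V. A + B \<in> V) \<and> (\<forall>c. \<forall>A\<in>V. c \<cdot>\<^sub>m A \<in> V)"

definition mat_image :: "nat \<Rightarrow> 'a::field mat \<Rightarrow> 'a vec set" where
  "mat_image n u = {u *\<^sub>v y | y. y \<in> carrier_vec n}"

definition good_vector :: "nat \<Rightarrow> 'a::field mat set \<Rightarrow> 'a vec \<Rightarrow> bool" where
  "good_vector n V x \<longleftrightarrow> x \<in> carrier_vec n \<and> x \<noteq> 0\<^sub>v n \<and>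
     \<not> (\<exists>u\<in>V. mat_image n u = {c \<cdot>\<^sub>v x | c. True} \<and> mat_trace u = 0)"

end

theory Submission
  imports Defs
begin

text \<open>
  If no vector is good, every nonzero x carries a trace-zero rank one map v \<mapsto> f_x(v) x in V,
  so f_x(x) = 0 and f_x \<noteq> 0. If f_x(y) and f_y(x) were both nonzero, the map c (x f_x) + y f_y
  with c = f_x(y) f_y(x) would lie in V and have the eigenvalues c and -c, distinct because the
  characteristic is not 2, and also 0 (on ker f_x \<inter> ker f_y) when n \<ge> 3; the hypothesis forbids
  this. So always f_x(y) = 0 or f_y(x) = 0. This lets us build x_0, ..., x_n with f_i = f_(x_i)
  satisfying f_i(x_j) = 0 for j \<le> i and f_i(x_(i+1)) = 1, taking for x_(k+1) a solution of
  f_i(v) = 1 (i \<le> k). Then f_0, ..., f_(n-1) are linearly independent by triangularity, yet they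
  all vanish at x_0 \<noteq> 0.
\<close>

lemma common_zero_of_few_functionals:
  fixes fs :: "nat \<Rightarrow> 'a::field vec"
  assumes k: "k < n" and fs: "\<And>i. i < k \<Longrightarrow> fs i \<in> carrier_vec n"
  shows "\<exists>v\<in>carrier_vec n. v \<noteq> 0\<^sub>v n \<and> (\<forall>i<k. fs i \<bullet> v = 0)"
proof -
  define rs where "rs i = (if i < k then fs i else 0\<^sub>v n)" for i
  define G where "G = mat\<^sub>r n n (\<lambda>i. if i = k then 0\<^sub>v n else rs i)"
  have rs: "rs i \<in> carrier_vec n" for i
    using fs by (simp add: rs_def)
  have G: "G \<in> carrier_mat n n"
    by (simp add: G_def)
  have "det G = 0"
    unfolding G_def using k rs by (intro det_row_0) auto
  then obtain v where v: "v \<in> carrier_vec n" "v \<noteq> 0\<^sub>v n" "G *\<^sub>v v = 0\<^sub>v n"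
    using det_0_iff_vec_prod_zero[OF G] by blast
  have "fs i \<bullet> v = 0" if i: "i < k" for i
  proof -
    have "row G i = rs i"
      unfolding G_def using i k rs by (subst row_mat_of_row_fun) auto
    then have "row G i = fs i"
      using i by (simp add: rs_def)
    then show ?thesis
      using arg_cong[OF v(3), of "\<lambda>w. w $ i"] i k G by simp
  qed
  then show ?thesis
    using v by blast
qed

lemma functionals_dependent_of_common_zero:
  fixes fs :: "nat \<Rightarrow> 'a::field vec"
  assumes fs: "\<And>i. i < n \<Longrightarrow> fs i \<in> carrier_vec n"
    and x: "x \<in> carrier_vec n" "x \<noteq> 0\<^sub>v n" and zero: "\<And>i. i < n \<Longrightarrow> fs i \<bullet> x = 0"
  shows "\<exists>c\<in>carrier_vec n. c \<noteq> 0\<^sub>v n \<and> (\<forall>w\<in>carrier_vec n. (\<Sum>i<n. c $ i * (fs i \<bullet> w)) = 0)"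
proof -
  define G where "G = mat\<^sub>r n n fs"
  have G: "G \<in> carrier_mat n n" and GT: "transpose_mat G \<in> carrier_mat n n"
    by (simp_all add: G_def)
  have G_mult: "G *\<^sub>v w = vec n (\<lambda>i. fs i \<bullet> w)" for w
    using fs by (intro eq_vecI) (auto simp: G_def)
  have "G *\<^sub>v x = 0\<^sub>v n"
    using zero by (auto simp: G_mult)
  then have "det (transpose_mat G) = 0"
    using det_0_iff_vec_prod_zero[OF G] x by (auto simp: det_transpose[OF G])
  then obtain c where c: "c \<in> carrier_vec n" "c \<noteq> 0\<^sub>v n" "transpose_mat G *\<^sub>v c = 0\<^sub>v n"
    using det_0_iff_vec_prod_zero[OF GT] by blast
  have "(\<Sum>i<n. c $ i * (fs i \<bullet> w)) = 0" if w: "w \<in> carrier_vec n" for w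
  proof -
    have "(\<Sum>i<n. c $ i * (fs i \<bullet> w)) = c \<bullet> (G *\<^sub>v w)"
      using c(1) by (simp add: G_mult scalar_prod_def lessThan_atLeast0)
    also have "\<dots> = (transpose_mat G *\<^sub>v c) \<bullet> w"
      using transpose_vec_mult_scalar[OF G w c(1)] by simp
    also have "\<dots> = 0"
      using c(3) w by simp
    finally show ?thesis .
  qed
  then show ?thesis
    using c by blast
qed

lemma triangular_functionals_independent:
  fixes fs xs :: "nat \<Rightarrow> 'a::field vec"
  assumes below: "\<And>i j. i < m \<Longrightarrow> j \<le> i \<Longrightarrow> fs i \<bullet> xs j = 0"
    and next_one: "\<And>i. i < m \<Longrightarrow> fs i \<bullet> xs (Suc i) = 1"
    and comb: "\<And>j. j < m \<Longrightarrow> (\<Sum>i<m. c i * (fs i \<bullet> xs (Suc j))) = 0"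
  shows "i < m \<Longrightarrow> c i = 0"
proof (induction i rule: less_induct)
  case (less i)
  have "c j * (fs j \<bullet> xs (Suc i)) = (if j = i then c i else 0)" if j: "j < m" for j
  proof -
    consider "j < i" | "j = i" | "i < j"
      by linarith
    then show ?thesis
    proof cases
      case 1
      then show ?thesis
        using less.IH less.prems by simp
    next
      case 2
      then show ?thesis
        using next_one less.prems by simp
    next
      case 3
      then show ?thesis
        using below[of j "Suc i"] j by simp
    qed
  qed
  then have "(\<Sum>j<m. c j * (fs j \<bullet> xs (Suc i))) = c i"
    using less.prems by simp
  then show ?case
    using comb[OF less.prems] by simp
qed

lemma triangular_system_solvable:
  fixes fs zs :: "nat \<Rightarrow> 'a::field vec"
  assumes fs: "\<And>i. i \<le> k \<Longrightarrow> fs i \<in> carrier_vec n"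
    and zs: "\<And>i. i \<le> k \<Longrightarrow> zs i \<in> carrier_vec n"
    and below: "\<And>i j. i \<le> k \<Longrightarrow> j \<le> i \<Longrightarrow> fs i \<bullet> zs j = 0"
    and next_one: "\<And>i. i < k \<Longrightarrow> fs i \<bullet> zs (Suc i) = 1"
    and y: "y \<in> carrier_vec n" "fs k \<bullet> y = 1"
  shows "\<exists>v\<in>carrier_vec n. \<forall>i\<le>k. fs i \<bullet> v = 1"
proof -
  have "\<exists>v\<in>carrier_vec n. \<forall>i. m \<le> i \<and> i \<le> k \<longrightarrow> fs i \<bullet> v = 1" if "m \<le> k" for m
    using that
  proof (induction m rule: inc_induct)
    case base
    show ?case
      using y by (intro bexI[of _ y]) (auto simp: le_antisym)
  next
    case (step m)
    then obtain v where v: "v \<in> carrier_vec n" "\<forall>i. Suc m \<le> i \<and> i \<le> k \<longrightarrow> fs i \<bullet> v = 1"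
      by blast
    \<comment> \<open>fix the equation for fs m using zs (Suc m), which all later fs i kill\<close>
    define v' where "v' = v + (1 - fs m \<bullet> v) \<cdot>\<^sub>v zs (Suc m)"
    have zm: "zs (Suc m) \<in> carrier_vec n"
      using zs step.hyps by simp
    have v': "fs i \<bullet> v' = fs i \<bullet> v + (1 - fs m \<bullet> v) * (fs i \<bullet> zs (Suc m))" if "i \<le> k" for i
      unfolding v'_def using fs[OF that] v(1) zm by (simp add: scalar_prod_add_distrib[of _ n])
    have "fs i \<bullet> v' = 1" if i: "m \<le> i" "i \<le> k" for i
    proof (cases "i = m")
      case True
      then show ?thesis
        using v' next_one step.hyps i by simp
    next
      case False
      then show ?thesis
        using v' below[of i "Suc m"] v(2) i by simp
    qed
    then show ?case
      using v(1) zm by (intro bexI[of _ v']) (auto simp: v'_def)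
  qed
  from this[of 0] show ?thesis
    by simp
qed

lemma smult_vec_right_cancel:
  fixes x :: "'a::field vec"
  assumes "a \<cdot>\<^sub>v x = b \<cdot>\<^sub>v x" and "x \<in> carrier_vec n" "x \<noteq> 0\<^sub>v n"
  shows "a = b"
proof -
  obtain i where i: "i < n" "x $ i \<noteq> 0"
    using assms(2,3) by (metis eq_vecI carrier_vecD index_zero_vec(1,2))
  then have "a * x $ i = b * x $ i"
    using arg_cong[OF assms(1), of "\<lambda>w. w $ i"] assms(2) by simp
  then show ?thesis
    using i by simp
qed

section \<open>Rank one maps\<close>

definition is_dyad :: "nat \<Rightarrow> 'a::comm_ring_1 mat \<Rightarrow> 'a vec \<Rightarrow> 'a vec \<Rightarrow> bool" where
  "is_dyad n u x f \<longleftrightarrow> u \<in> carrier_mat n n \<and> x \<in> carrier_vec n \<and> f \<in> carrier_vec n \<and>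
     (\<forall>v\<in>carrier_vec n. u *\<^sub>v v = (f \<bullet> v) \<cdot>\<^sub>v x)"

lemma rank_one_factorization:
  fixes u :: "'a::field mat"
  assumes u: "u \<in> carrier_mat n n" and x: "x \<in> carrier_vec n"
    and im: "mat_image n u \<subseteq> {c \<cdot>\<^sub>v x | c. True}"
  shows "\<exists>f. is_dyad n u x f"
proof -
  have "u *\<^sub>v unit_vec n j \<in> mat_image n u" for j
    unfolding mat_image_def by auto
  then have "\<forall>j\<in>{..<n}. \<exists>c. u *\<^sub>v unit_vec n j = c \<cdot>\<^sub>v x"
    using im by blast
  then obtain a where a: "\<And>j. j < n \<Longrightarrow> u *\<^sub>v unit_vec n j = a j \<cdot>\<^sub>v x"
    by (auto dest!: bchoice)
  define f where "f = vec n a"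
  have entry: "u $$ (i, j) = f $ j * x $ i" if "i < n" "j < n" for i j
  proof -
    have "u $$ (i, j) = (u *\<^sub>v unit_vec n j) $ i"
      using u that by simp
    then show ?thesis
      using a[of j] that x by (simp add: f_def)
  qed
  have "u *\<^sub>v v = (f \<bullet> v) \<cdot>\<^sub>v x" if v: "v \<in> carrier_vec n" for v
  proof (rule eq_vecI)
    fix i assume "i < dim_vec ((f \<bullet> v) \<cdot>\<^sub>v x)"
    then have i: "i < n"
      using x by simp
    have "(u *\<^sub>v v) $ i = (\<Sum>j<n. u $$ (i, j) * v $ j)"
      using u v i by (simp add: scalar_prod_def lessThan_atLeast0 row_def)
    also have "\<dots> = (\<Sum>j<n. x $ i * (f $ j * v $ j))"
      using i entry by (intro sum.cong) auto
    also have "\<dots> = x $ i * (f \<bullet> v)"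
      using v by (simp add: scalar_prod_def lessThan_atLeast0 sum_distrib_left f_def)
    finally show "(u *\<^sub>v v) $ i = ((f \<bullet> v) \<cdot>\<^sub>v x) $ i"
      using x i by (simp add: mult.commute)
  qed (use u x in simp)
  then have "is_dyad n u x f"
    using u x by (simp add: is_dyad_def f_def)
  then show ?thesis ..
qed

lemma mat_trace_dyad:
  assumes "is_dyad n u x f"
  shows "mat_trace u = f \<bullet> x"
proof -
  have u: "u \<in> carrier_mat n n" and x: "x \<in> carrier_vec n" and f: "f \<in> carrier_vec n"
    and uv: "\<And>v. v \<in> carrier_vec n \<Longrightarrow> u *\<^sub>v v = (f \<bullet> v) \<cdot>\<^sub>v x"
    using assms by (auto simp: is_dyad_def)
  have diag: "u $$ (i, i) = f $ i * x $ i" if i: "i < n" for i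
  proof -
    have "u $$ (i, i) = (u *\<^sub>v unit_vec n i) $ i"
      using u i by simp
    also have "\<dots> = f $ i * x $ i"
      using uv[of "unit_vec n i"] x i by simp
    finally show ?thesis .
  qed
  have "mat_trace u = (\<Sum>i<n. f $ i * x $ i)"
    unfolding mat_trace_def using u diag by (intro sum.cong) auto
  then show ?thesis
    using x by (simp add: scalar_prod_def lessThan_atLeast0)
qed

definition trace_free_dyad :: "nat \<Rightarrow> 'a::field mat set \<Rightarrow> 'a vec \<Rightarrow> 'a vec \<Rightarrow> bool" where
  "trace_free_dyad n V x f \<longleftrightarrow> (\<exists>u\<in>V. is_dyad n u x f) \<and> f \<bullet> x = 0 \<and> (\<exists>y\<in>carrier_vec n. f \<bullet> y = 1)"

lemma trace_free_dyad_of_not_good: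
  assumes V: "V \<subseteq> carrier_mat n n" and x: "x \<in> carrier_vec n" "x \<noteq> 0\<^sub>v n"
    and not_good: "\<not> good_vector n V x"
  shows "\<exists>f. trace_free_dyad n V x f"
proof -
  obtain u where u: "u \<in> V" and im: "mat_image n u = {c \<cdot>\<^sub>v x | c. True}" and tr: "mat_trace u = 0"
    using not_good x unfolding good_vector_def by blast
  obtain f where f: "is_dyad n u x f"
    using rank_one_factorization[of u n x] u V x im by blast
  have "x \<in> mat_image n u"
    using im by (auto intro!: exI[of _ 1])
  then obtain y where y: "y \<in> carrier_vec n" "u *\<^sub>v y = x"
    unfolding mat_image_def by blast
  then have "(f \<bullet> y) \<cdot>\<^sub>v x = 1 \<cdot>\<^sub>v x"
    using f by (simp add: is_dyad_def)
  then have "f \<bullet> y = 1"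
    using x by (rule smult_vec_right_cancel)
  moreover have "f \<bullet> x = 0"
    using mat_trace_dyad[OF f] tr by simp
  ultimately show ?thesis
    using u f y unfolding trace_free_dyad_def by blast
qed

lemma finite_eigenvalues:
  assumes "(A::'a::field mat) \<in> carrier_mat n n"
  shows "finite {k. eigenvalue A k}"
proof -
  have "char_poly A \<noteq> 0"
    using degree_monic_char_poly[OF assms] by (metis coeff_0 zero_neq_one)
  then show ?thesis
    using poly_roots_finite eigenvalue_root_char_poly[OF assms] by simp
qed

lemma opposite_eigenvalues_contradict_bound:
  fixes A :: "'a::field mat"
  assumes char: "(2::'a) \<noteq> 0"
    and hyp: "(n \<ge> 3 \<and> (\<forall>u\<in>V. card {k. eigenvalue u k} \<le> 2)) \<or>
              (n \<ge> 2 \<and> (\<forall>u\<in>V. card {k. eigenvalue u k \<and> k \<noteq> 0} \<le> 1))"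
    and A: "A \<in> V" "A \<in> carrier_mat n n"
    and ev: "c \<noteq> 0" "eigenvalue A c" "eigenvalue A (- c)"
    and ev_zero: "n \<ge> 3 \<Longrightarrow> eigenvalue A 0"
  shows False
proof -
  have fin: "finite {k. eigenvalue A k}"
    using finite_eigenvalues[OF A(2)] .
  have "c \<noteq> - c"
  proof
    assume "c = - c"
    then have "2 * c = 0"
      by (metis add.right_inverse mult_2)
    then show False
      using char ev(1) by simp
  qed
  from hyp show False
  proof
    assume bound: "n \<ge> 3 \<and> (\<forall>u\<in>V. card {k. eigenvalue u k} \<le> 2)"
    have "{0, c, - c} \<subseteq> {k. eigenvalue A k}"
      using ev ev_zero bound by auto
    then have "card {0, c, - c} \<le> card {k. eigenvalue A k}"
      using fin by (rule card_mono[rotated])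
    then show False
      using bound A(1) \<open>c \<noteq> - c\<close> ev(1) by fastforce
  next
    assume bound: "n \<ge> 2 \<and> (\<forall>u\<in>V. card {k. eigenvalue u k \<and> k \<noteq> 0} \<le> 1)"
    have "{c, - c} \<subseteq> {k. eigenvalue A k \<and> k \<noteq> 0}"
      using ev by auto
    then have "card {c, - c} \<le> card {k. eigenvalue A k \<and> k \<noteq> 0}"
      using fin by (intro card_mono) auto
    then show False
      using bound A(1) \<open>c \<noteq> - c\<close> by fastforce
  qed
qed

lemma dyad_combination_mult_vec:
  assumes u: "is_dyad n u x f" and w: "is_dyad n w y g" and v: "v \<in> carrier_vec n"
  shows "(a \<cdot>\<^sub>m u + w) *\<^sub>v v = (a * (f \<bullet> v)) \<cdot>\<^sub>v x + (g \<bullet> v) \<cdot>\<^sub>v y"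
proof -
  have uc: "u \<in> carrier_mat n n" and wc: "w \<in> carrier_mat n n"
    and x: "x \<in> carrier_vec n" and y: "y \<in> carrier_vec n"
    using u w by (simp_all add: is_dyad_def)
  show ?thesis
  proof (rule eq_vecI)
    fix i assume "i < dim_vec ((a * (f \<bullet> v)) \<cdot>\<^sub>v x + (g \<bullet> v) \<cdot>\<^sub>v y)"
    then have i: "i < n"
      using y by simp
    have "((a \<cdot>\<^sub>m u + w) *\<^sub>v v) $ i = a * (u *\<^sub>v v) $ i + (w *\<^sub>v v) $ i"
      using uc wc i v by (simp add: add_scalar_prod_distrib[of _ n])
    then show "((a \<cdot>\<^sub>m u + w) *\<^sub>v v) $ i = ((a * (f \<bullet> v)) \<cdot>\<^sub>v x + (g \<bullet> v) \<cdot>\<^sub>v y) $ i"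
      using u w v x y i by (simp add: is_dyad_def)
  qed (use wc y in simp)
qed

lemma eigenvalue_crossing_dyads:
  fixes u w :: "'a::field mat"
  assumes u: "is_dyad n u x f" and w: "is_dyad n w y g"
    and fx: "f \<bullet> x = 0" and gy: "g \<bullet> y = 0" and fy: "f \<bullet> y \<noteq> 0" and sign: "\<sigma> * \<sigma> = 1"
  shows "eigenvalue (((f \<bullet> y) * (g \<bullet> x)) \<cdot>\<^sub>m u + w) (\<sigma> * ((f \<bullet> y) * (g \<bullet> x)))"
proof -
  define s where "s = f \<bullet> y"
  define c where "c = s * (g \<bullet> x)"
  define e where "e = s \<cdot>\<^sub>v x + \<sigma> \<cdot>\<^sub>v y"
  have x: "x \<in> carrier_vec n" and y: "y \<in> carrier_vec n" and f: "f \<in> carrier_vec n"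
    and g: "g \<in> carrier_vec n" and wc: "w \<in> carrier_mat n n"
    using u w by (simp_all add: is_dyad_def)
  have e: "e \<in> carrier_vec n"
    using x y by (simp add: e_def)
  have fe: "f \<bullet> e = \<sigma> * s" and ge: "g \<bullet> e = c"
    using f g x y fx gy by (simp_all add: e_def s_def c_def scalar_prod_add_distrib[of _ n])
  have "e \<noteq> 0\<^sub>v n"
    using fe fy sign f by (auto simp: s_def)
  moreover have "(c \<cdot>\<^sub>m u + w) *\<^sub>v e = (\<sigma> * c) \<cdot>\<^sub>v e"
    unfolding dyad_combination_mult_vec[OF u w e] fe ge
    using x y sign by (intro eq_vecI) (auto simp: e_def algebra_simps)
  ultimately show ?thesis
    using e wc unfolding eigenvalue_def eigenvector_def s_def c_def by auto
qed

lemma trace_free_dyads_one_sided: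
  fixes V :: "'a::field mat set"
  assumes char: "(2::'a) \<noteq> 0"
    and V: "lin_subspace_mat n V"
    and hyp: "(n \<ge> 3 \<and> (\<forall>u\<in>V. card {k. eigenvalue u k} \<le> 2)) \<or>
              (n \<ge> 2 \<and> (\<forall>u\<in>V. card {k. eigenvalue u k \<and> k \<noteq> 0} \<le> 1))"
    and x: "trace_free_dyad n V x f" and y: "trace_free_dyad n V y g"
  shows "f \<bullet> y = 0 \<or> g \<bullet> x = 0"
proof (rule ccontr)
  assume "\<not> ?thesis"
  then have fy: "f \<bullet> y \<noteq> 0" and gx: "g \<bullet> x \<noteq> 0"
    by auto
  obtain u w where u: "u \<in> V" "is_dyad n u x f" and w: "w \<in> V" "is_dyad n w y g"
    and fx: "f \<bullet> x = 0" and gy: "g \<bullet> y = 0"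
    using x y unfolding trace_free_dyad_def by blast
  define c where "c = (f \<bullet> y) * (g \<bullet> x)"
  define A where "A = c \<cdot>\<^sub>m u + w"
  have AV: "A \<in> V"
    using V u w unfolding lin_subspace_mat_def A_def by blast
  have A: "A \<in> carrier_mat n n"
    using AV V unfolding lin_subspace_mat_def by blast
  have "eigenvalue A c" "eigenvalue A (- c)"
    using eigenvalue_crossing_dyads[OF u(2) w(2) fx gy fy, of 1]
      eigenvalue_crossing_dyads[OF u(2) w(2) fx gy fy, of "-1"]
    unfolding A_def c_def by simp_all
  moreover have "eigenvalue A 0" if "n \<ge> 3"
  proof -
    have "f \<in> carrier_vec n" "g \<in> carrier_vec n"
      using u w by (simp_all add: is_dyad_def)
    then have "\<exists>z\<in>carrier_vec n. z \<noteq> 0\<^sub>v n \<and> (\<forall>i<2::nat. (if i = 0 then f else g) \<bullet> z = 0)"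
      using that by (intro common_zero_of_few_functionals) auto
    then obtain z where z: "z \<in> carrier_vec n" "z \<noteq> 0\<^sub>v n"
      and fg: "\<forall>i<2::nat. (if i = 0 then f else g) \<bullet> z = 0"
      by blast
    have "f \<bullet> z = 0" "g \<bullet> z = 0"
      using fg[rule_format, of 0] fg[rule_format, of 1] by simp_all
    then have "A *\<^sub>v z = 0 \<cdot>\<^sub>v z"
      unfolding A_def dyad_combination_mult_vec[OF u(2) w(2) z(1)]
      using u w z(1) by (intro eq_vecI) (auto simp: is_dyad_def)
    then show ?thesis
      using z A unfolding eigenvalue_def eigenvector_def by auto
  qed
  moreover have "c \<noteq> 0"
    using fy gx by (simp add: c_def)
  ultimately show False
    using opposite_eigenvalues_contradict_bound[OF char hyp AV A] by simp
qed

section \<open>One-sided choices of annihilating functionals\<close>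

context
  fixes n :: nat and F :: "'a::field vec \<Rightarrow> 'a vec"
  assumes F_carrier: "\<And>x. x \<in> carrier_vec n \<Longrightarrow> x \<noteq> 0\<^sub>v n \<Longrightarrow> F x \<in> carrier_vec n"
    and F_annihilates: "\<And>x. x \<in> carrier_vec n \<Longrightarrow> x \<noteq> 0\<^sub>v n \<Longrightarrow> F x \<bullet> x = 0"
    and F_nonzero: "\<And>x. x \<in> carrier_vec n \<Longrightarrow> x \<noteq> 0\<^sub>v n \<Longrightarrow> \<exists>y\<in>carrier_vec n. F x \<bullet> y = 1"
    and F_one_sided: "\<And>x y. x \<in> carrier_vec n \<Longrightarrow> x \<noteq> 0\<^sub>v n \<Longrightarrow> y \<in> carrier_vec n \<Longrightarrow>
      y \<noteq> 0\<^sub>v n \<Longrightarrow> F x \<bullet> y = 0 \<or> F y \<bullet> x = 0"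
begin

lemma one_sided_chain_exists:
  assumes "n \<ge> 1"
  shows "\<exists>xs. (\<forall>i\<le>k. xs i \<in> carrier_vec n \<and> xs i \<noteq> 0\<^sub>v n) \<and>
    (\<forall>i\<le>k. \<forall>j\<le>i. F (xs i) \<bullet> xs j = 0) \<and> (\<forall>i<k. F (xs i) \<bullet> xs (Suc i) = 1)"
proof (induction k)
  case 0
  have "unit_vec n 0 \<noteq> (0\<^sub>v n :: 'a vec)"
    using assms by simp
  then show ?case
    using F_annihilates[of "unit_vec n 0"] by (intro exI[of _ "\<lambda>_. unit_vec n 0"]) auto
next
  case (Suc k)
  then obtain xs where xs: "\<And>i. i \<le> k \<Longrightarrow> xs i \<in> carrier_vec n \<and> xs i \<noteq> 0\<^sub>v n"
    and below: "\<And>i j. i \<le> k \<Longrightarrow> j \<le> i \<Longrightarrow> F (xs i) \<bullet> xs j = 0"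
    and next_one: "\<And>i. i < k \<Longrightarrow> F (xs i) \<bullet> xs (Suc i) = 1"
    by blast
  obtain y where "y \<in> carrier_vec n" "F (xs k) \<bullet> y = 1"
    using F_nonzero xs[of k] by blast
  then obtain v where v: "v \<in> carrier_vec n" and v_one: "\<And>i. i \<le> k \<Longrightarrow> F (xs i) \<bullet> v = 1"
    using triangular_system_solvable[of k "\<lambda>i. F (xs i)" n xs y] F_carrier xs below next_one
    by blast
  have v_nonzero: "v \<noteq> 0\<^sub>v n"
    using v_one[of 0] F_carrier[of "xs 0"] xs[of 0] by auto
  \<comment> \<open>each earlier functional is nonzero on v, so one-sidedness forces F v to vanish on the chain\<close>
  have v_kills: "F v \<bullet> xs j = 0" if "j \<le> k" for j
    using F_one_sided[of "xs j" v] xs[OF that] v v_nonzero v_one[OF that] by auto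
  define xs' where "xs' = xs(Suc k := v)"
  have "\<forall>i\<le>Suc k. xs' i \<in> carrier_vec n \<and> xs' i \<noteq> 0\<^sub>v n"
    using xs v v_nonzero by (auto simp: xs'_def le_Suc_eq)
  moreover have "\<forall>i\<le>Suc k. \<forall>j\<le>i. F (xs' i) \<bullet> xs' j = 0"
    using below v_kills F_annihilates[OF v v_nonzero] by (auto simp: xs'_def le_Suc_eq)
  moreover have "\<forall>i<Suc k. F (xs' i) \<bullet> xs' (Suc i) = 1"
    using next_one v_one by (auto simp: xs'_def less_Suc_eq)
  ultimately show ?case
    by blast
qed

lemma one_sided_annihilator_assignment_impossible:
  assumes "n \<ge> 1"
  shows False
proof -
  obtain xs where xs: "\<And>i. i \<le> n \<Longrightarrow> xs i \<in> carrier_vec n \<and> xs i \<noteq> 0\<^sub>v n"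
    and below: "\<And>i j. i \<le> n \<Longrightarrow> j \<le> i \<Longrightarrow> F (xs i) \<bullet> xs j = 0"
    and next_one: "\<And>i. i < n \<Longrightarrow> F (xs i) \<bullet> xs (Suc i) = 1"
    using one_sided_chain_exists[OF assms, of n] by blast
  have "\<exists>c\<in>carrier_vec n. c \<noteq> 0\<^sub>v n \<and>
    (\<forall>w\<in>carrier_vec n. (\<Sum>i<n. c $ i * (F (xs i) \<bullet> w)) = 0)"
    by (rule functionals_dependent_of_common_zero) (use F_carrier xs below in auto)
  then obtain c where c: "c \<in> carrier_vec n" "c \<noteq> 0\<^sub>v n"
    and comb: "\<And>w. w \<in> carrier_vec n \<Longrightarrow> (\<Sum>i<n. c $ i * (F (xs i) \<bullet> w)) = 0"
    by blast
  have "c $ i = 0" if "i < n" for i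
    using triangular_functionals_independent[of n "\<lambda>i. F (xs i)" xs "\<lambda>i. c $ i"] that
      below next_one comb xs by simp
  then have "c = 0\<^sub>v n"
    using c(1) by (intro eq_vecI) auto
  then show False
    using c(2) by contradiction
qed

end

theorem mainTheorem8:
  fixes n :: nat and V :: "'a::field mat set"
  assumes char: "(2::'a) \<noteq> 0"
    and V: "lin_subspace_mat n V"
    and hyp: "(n \<ge> 3 \<and> (\<forall>u\<in>V. card {k. eigenvalue u k} \<le> 2)) \<or>
              (n \<ge> 2 \<and> (\<forall>u\<in>V. card {k. eigenvalue u k \<and> k \<noteq> 0} \<le> 1))"
  shows "\<exists>x. good_vector n V x"
proof (rule ccontr)
  assume "\<nexists>x. good_vector n V x"
  then have "\<forall>x\<in>carrier_vec n - {0\<^sub>v n}. \<exists>f. trace_free_dyad n V x f"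
    using trace_free_dyad_of_not_good V unfolding lin_subspace_mat_def by blast
  then obtain F where F: "\<And>x. x \<in> carrier_vec n \<Longrightarrow> x \<noteq> 0\<^sub>v n \<Longrightarrow> trace_free_dyad n V x (F x)"
    by (auto dest!: bchoice)
  show False
  proof (rule one_sided_annihilator_assignment_impossible)
    show "F x \<in> carrier_vec n" "F x \<bullet> x = 0" "\<exists>y\<in>carrier_vec n. F x \<bullet> y = 1"
      if "x \<in> carrier_vec n" "x \<noteq> 0\<^sub>v n" for x
      using F[OF that] unfolding trace_free_dyad_def is_dyad_def by auto
    show "F x \<bullet> y = 0 \<or> F y \<bullet> x = 0"
      if "x \<in> carrier_vec n" "x \<noteq> 0\<^sub>v n" "y \<in> carrier_vec n" "y \<noteq> 0\<^sub>v n" for x y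
      using trace_free_dyads_one_sided[OF char V hyp F[OF that(1,2)] F[OF that(3,4)]] .
    show "n \<ge> 1"
      using hyp by auto
  qed
qed

end
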